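(* Let $p$ be prime, $f\ge1$, let $r_0,\dots,r_{f-1}$ be integers in $[1,p]$, let $J\subset\{0,\dots,f-1\}$, and set $h_i=r_i$ if $i\in J$ and $h_i=0$ otherwise. Then $$\sum_{i=0}^{f-1}p^{f-1-i}h_i\equiv\sum_{i=0}^{f-1}p^{f-1-i}(r_i-h_i)\pmod{p^f-1}$$ if and only if either: $(r_0,\dots,r_{f-1})\in\mathcal P$ and $J$ satisfies, for all $i$ (indices mod $f$): if $(r_{i-1},r_i)=(p,1)$ then ($i+1\in J\iff i\notin J$), and if $(r_{i-1},r_i)\in\{(1,p-1),(p-1,p-1)\}$ then ($i+1\in J\iff i\in J$); or else $p=2$, $(r_0,\dots,r_{f-1})=(2,\dots,2)$ and $J=\varnothing$ or $J=\{0,\dots,f-1\}$.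
   Context: $\mathcal P$ is the set of $f$-tuples $(r_0,\dots,r_{f-1})$ with every $r_i\in\{1,p-1,p\}$ such that, taking indices mod $f$ (so $r_f=r_0$): if $r_i=p$ then $r_{i+1}=1$, and if $r_i\in\{1,p-1\}$ then $r_{i+1}\in\{p-1,p\}$. *)

theory Defs
  imports "HOL-Number_Theory.Number_Theory"
begin

text \<open>Tuples (r_0,...,r_{f-1}) are represented by functions r :: nat => nat,
  only the values at indices i < f matter; indices are taken mod f.\<close>

definition inP :: "nat \<Rightarrow> nat \<Rightarrow> (nat \<Rightarrow> nat) \<Rightarrow> bool" where
  "inP p f r \<longleftrightarrow> (\<forall>i<f. r i \<in> {1, p - 1, p} \<and>
      (r i = p \<longrightarrow> r ((i + 1) mod f) = 1) \<and>
      (r i \<in> {1, p - 1} \<longrightarrow> r ((i + 1) mod f) \<in> {p - 1, p}))"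

definition hval :: "(nat \<Rightarrow> nat) \<Rightarrow> nat set \<Rightarrow> nat \<Rightarrow> nat" where
  "hval r J i = (if i \<in> J then r i else 0)"

definition J_compatible :: "nat \<Rightarrow> nat \<Rightarrow> (nat \<Rightarrow> nat) \<Rightarrow> nat set \<Rightarrow> bool" where
  "J_compatible p f r J \<longleftrightarrow> (\<forall>i<f.
      ((r ((i + f - 1) mod f), r i) = (p, 1) \<longrightarrow>
         (((i + 1) mod f \<in> J) \<longleftrightarrow> i \<notin> J)) \<and>
      ((r ((i + f - 1) mod f), r i) \<in> {(1, p - 1), (p - 1, p - 1)} \<longrightarrow>
         (((i + 1) mod f \<in> J) \<longleftrightarrow> i \<in> J)))"

end

theory Submission imports Defs begin

(*
  Write d_i = (if i \<in> J then r_i else -r_i) for the signed digits.  The difference of the two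
  sides of the congruence is the p-adic number with digits d_i, so the congruence says
  (p^f - 1) divides sum_i p^(f-1-i) d_i.  The first part of the file shows, for an arbitrary
  integer base P, that this divisibility is equivalent to the existence of cyclic "carries"
  c_0, ..., c_(f-1) with d_i + c_(i+1 mod f) = P c_i.  Since |d_i| <= P, a maximal carry c
  satisfies P|c| <= P + |c|, hence all carries lie in {-1,0,1}, except when P = 2 and some
  carry is +-2, in which case all carries and all digits equal that same value +-2.
  For carries in {-1,0,1} a digit-by-digit case analysis shows that r_i is 1, p-1 or p
  according to the carries around it; this yields exactly the conditions "r \<in> P" and
  "J compatible with r".  Conversely, carries are written down explicitly in both cases of
  the characterisation.
*)

definition signed_digit :: "(nat \<Rightarrow> nat) \<Rightarrow> nat set \<Rightarrow> nat \<Rightarrow> int" where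
  "signed_digit r J i = (if i \<in> J then int (r i) else - int (r i))"

definition carries :: "int \<Rightarrow> nat \<Rightarrow> (nat \<Rightarrow> int) \<Rightarrow> (nat \<Rightarrow> int) \<Rightarrow> bool" where
  "carries P f e c \<longleftrightarrow> (\<forall>i<f. e i + c ((i + 1) mod f) = P * c i)"

lemma cyclic_pred_succ:
  fixes i f :: nat assumes "i < f"
  shows "(i + f - 1) mod f < f" "((i + f - 1) mod f + 1) mod f = i"
    and "((i + 1) mod f + f - 1) mod f = i"
proof -
  show "(i + f - 1) mod f < f" using assms by simp
  have "((i + f - 1) mod f + 1) mod f = (i + f) mod f" using assms by (simp add: mod_Suc_eq)
  then show "((i + f - 1) mod f + 1) mod f = i" using assms by simp
  show "((i + 1) mod f + f - 1) mod f = i"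
    using assms by (cases "i + 1 = f") auto
qed

section \<open>Divisibility by P^f - 1 and cyclic carries\<close>

lemma horner_step:
  fixes P :: int and e :: "nat \<Rightarrow> int"
  shows "(\<Sum>i<Suc n. P^(Suc n - 1 - i) * e i) = P * (\<Sum>i<n. P^(n - 1 - i) * e i) + e n"
proof -
  have "(\<Sum>i<n. P^(Suc n - 1 - i) * e i) = (\<Sum>i<n. P * (P^(n - 1 - i) * e i))"
  proof (rule sum.cong)
    fix i assume "i \<in> {..<n}"
    then have "Suc n - 1 - i = Suc (n - 1 - i)" by auto
    then show "P^(Suc n - 1 - i) * e i = P * (P^(n - 1 - i) * e i)" by simp
  qed simp
  then show ?thesis by (simp add: sum_distrib_left)
qed

lemma carry_telescope:
  fixes P :: int and c :: "nat \<Rightarrow> int"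
  shows "(\<Sum>i<n. P^(n - 1 - i) * (P * c i - c (Suc i))) = P^n * c 0 - c n"
proof (induction n)
  case 0 then show ?case by simp
next
  case (Suc n)
  show ?case
    unfolding horner_step[where e = "\<lambda>i. P * c i - c (Suc i)"] Suc by (simp add: algebra_simps)
qed

text \<open>The key reformulation: divisibility by P^f - 1 means the digits admit cyclic carries.
  The carries are c_n = k P^n - (value of the first n digits), where k is the quotient.\<close>
lemma dvd_iff_carries:
  fixes P :: int and e :: "nat \<Rightarrow> int" assumes "f \<ge> 1"
  shows "(P^f - 1) dvd (\<Sum>i<f. P^(f - 1 - i) * e i) \<longleftrightarrow> (\<exists>c. carries P f e c)"
proof
  define H where "H n = (\<Sum>i<n. P^(n - 1 - i) * e i)" for n
  assume "(P^f - 1) dvd (\<Sum>i<f. P^(f - 1 - i) * e i)"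
  then obtain k where k: "H f = (P^f - 1) * k" unfolding H_def by (auto elim: dvdE)
  define c where "c n = k * P^n - H n" for n
  have periodic: "c f = c 0" unfolding c_def using k by (simp add: H_def algebra_simps)
  have step: "e i + c (Suc i) = P * c i" for i
    unfolding c_def H_def using horner_step[of P i e] by (simp add: algebra_simps)
  have "carries P f e c"
    unfolding carries_def
  proof (intro allI impI)
    fix i assume "i < f"
    then show "e i + c ((i + 1) mod f) = P * c i"
      using step[of i] periodic by (cases "i + 1 = f") auto
  qed
  then show "\<exists>c. carries P f e c" by blast
next
  assume "\<exists>c. carries P f e c"
  then obtain c where c: "carries P f e c" ..
  define c' where "c' n = c (n mod f)" for n
  have "(\<Sum>i<f. P^(f - 1 - i) * e i) = (\<Sum>i<f. P^(f - 1 - i) * (P * c' i - c' (Suc i)))"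
  proof (rule sum.cong)
    fix i assume "i \<in> {..<f}"
    then have "e i = P * c' i - c' (Suc i)"
      using c unfolding carries_def c'_def by (simp add: algebra_simps)
    then show "P^(f - 1 - i) * e i = P^(f - 1 - i) * (P * c' i - c' (Suc i))" by simp
  qed simp
  also have "\<dots> = P^f * c' 0 - c' f" by (rule carry_telescope)
  also have "\<dots> = (P^f - 1) * c 0" unfolding c'_def by (simp add: algebra_simps)
  finally show "(P^f - 1) dvd (\<Sum>i<f. P^(f - 1 - i) * e i)" by simp
qed

section \<open>Size of the carries\<close>

text \<open>The inequality satisfied by the largest carry x in absolute value.\<close>
lemma bound_from_max_carry:
  fixes P x :: int
  assumes "P \<ge> 2" "x \<ge> 0" "P * x \<le> P + x"
  shows "x \<le> 1 \<or> (P = 2 \<and> x = 2)"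
proof (rule ccontr)
  assume contra: "\<not> ?thesis"
  then have "x \<ge> 2" by auto
  then have "(P - 1) * 2 \<le> (P - 1) * x" using assms by (intro mult_left_mono) auto
  then have "P = 2" using assms by (simp add: algebra_simps)
  then show False using contra assms \<open>x \<ge> 2\<close> by auto
qed

lemma carries_bounded:
  fixes P :: int
  assumes c: "carries P f e c" and "f \<ge> 1" "P \<ge> 2" and e: "\<forall>i<f. \<bar>e i\<bar> \<le> P"
  shows "(\<forall>i<f. \<bar>c i\<bar> \<le> 1) \<or> (P = 2 \<and> (\<exists>i0<f. \<bar>c i0\<bar> = 2) \<and> (\<forall>i<f. \<bar>c i\<bar> \<le> 2))"
proof -
  define M where "M = Max ((\<lambda>i. \<bar>c i\<bar>) ` {..<f})"
  have fin: "finite ((\<lambda>i. \<bar>c i\<bar>) ` {..<f})" "(\<lambda>i. \<bar>c i\<bar>) ` {..<f} \<noteq> {}"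
    using \<open>f \<ge> 1\<close> by (auto simp: lessThan_empty_iff)
  obtain i0 where i0: "i0 < f" "\<bar>c i0\<bar> = M"
    using Max_in[OF fin] unfolding M_def by auto
  have le_M: "\<bar>c i\<bar> \<le> M" if "i < f" for i
    unfolding M_def using fin that by (intro Max_ge) auto
  have "P * M = \<bar>e i0 + c ((i0 + 1) mod f)\<bar>"
    using c i0 \<open>P \<ge> 2\<close> unfolding carries_def by (simp add: abs_mult)
  also have "\<dots> \<le> \<bar>e i0\<bar> + \<bar>c ((i0 + 1) mod f)\<bar>" by (rule abs_triangle_ineq)
  also have "\<dots> \<le> P + M" using e i0(1) le_M[of "(i0 + 1) mod f"] \<open>f \<ge> 1\<close> by fastforce
  finally have "M \<le> 1 \<or> (P = 2 \<and> M = 2)"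
    using bound_from_max_carry[of P M] \<open>P \<ge> 2\<close> i0(2) by auto
  then show ?thesis using le_M i0 by fastforce
qed

text \<open>In base 2 with digits of size at most 2, a carry of size 2 propagates around the
  whole cycle and forces every carry and every digit to equal it.\<close>
lemma carries_base_two_constant:
  assumes c: "carries 2 f e c" and "i0 < f" "\<bar>c i0\<bar> = 2"
    and e: "\<forall>i<f. \<bar>e i\<bar> \<le> 2" and cb: "\<forall>i<f. \<bar>c i\<bar> \<le> 2"
  shows "\<forall>i<f. c i = c i0 \<and> e i = c i0"
proof -
  have step: "c ((i + 1) mod f) = c i \<and> e i = c i" if "i < f" "\<bar>c i\<bar> = 2" for i
  proof -
    have "(i + 1) mod f < f" using \<open>i < f\<close> by simp
    then have "\<bar>c ((i + 1) mod f)\<bar> \<le> 2" "e i + c ((i + 1) mod f) = 2 * c i"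
      using c cb \<open>i < f\<close> unfolding carries_def by auto
    then show ?thesis using e \<open>i < f\<close> \<open>\<bar>c i\<bar> = 2\<close> by auto
  qed
  have along_cycle: "c ((i0 + k) mod f) = c i0" for k
  proof (induction k)
    case 0 then show ?case using \<open>i0 < f\<close> by simp
  next
    case (Suc k)
    have "(i0 + k) mod f < f" using \<open>i0 < f\<close> by simp
    then have "c (((i0 + k) mod f + 1) mod f) = c ((i0 + k) mod f)"
      using step Suc \<open>\<bar>c i0\<bar> = 2\<close> by auto
    then show ?case using Suc by (simp add: mod_Suc_eq)
  qed
  have "c i = c i0" if "i < f" for i
    using along_cycle[of "i + f - i0"] \<open>i0 < f\<close> that by simp
  then show ?thesis using step \<open>\<bar>c i0\<bar> = 2\<close> by auto
qed

text \<open>The difference of the two sides of the congruence has the signed digits.\<close>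
lemma congruence_iff_signed_dvd:
  "[(\<Sum>i<f. int p ^ (f - 1 - i) * int (hval r J i))
      = (\<Sum>i<f. int p ^ (f - 1 - i) * (int (r i) - int (hval r J i)))] (mod (int p ^ f - 1))
   \<longleftrightarrow> (int p ^ f - 1) dvd (\<Sum>i<f. int p ^ (f - 1 - i) * signed_digit r J i)"
proof -
  have "signed_digit r J = (\<lambda>i. 2 * int (hval r J i) - int (r i))"
    unfolding signed_digit_def hval_def by auto
  then show ?thesis
    unfolding cong_iff_dvd_diff sum_subtractf[symmetric] by (simp add: algebra_simps)
qed

text \<open>Local analysis of one digit when the carries are in {-1,0,1}: either no carry comes
  out of position i and the digit is 1, or a carry comes out and none goes in and the digit
  is p, or the same carry goes in and out and the digit is p - 1.  In each case the sign of
  the digit (membership in J) is determined by the carries.\<close>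
lemma unit_carry_step:
  fixes c c' :: int and r p :: nat
  assumes "p \<ge> 2" "\<bar>c\<bar> \<le> 1" "\<bar>c'\<bar> \<le> 1" "1 \<le> r" "r \<le> p"
    and "(if b then int r else - int r) + c' = int p * c"
  shows "(c = 0 \<and> r = 1 \<and> c' \<noteq> 0 \<and> (b \<longleftrightarrow> c' = -1)) \<or>
         (c \<noteq> 0 \<and> c' = 0 \<and> r = p \<and> (b \<longleftrightarrow> c = 1)) \<or>
         (c \<noteq> 0 \<and> c' = c \<and> r = p - 1 \<and> (b \<longleftrightarrow> c = 1))"
proof -
  have "c = -1 \<or> c = 0 \<or> c = 1" using assms(2) by auto
  then show ?thesis using assms by (cases b) auto
qed

lemma unit_carries_imp_compatible:
  assumes "p \<ge> 2" "f \<ge> 1" and r: "\<forall>i<f. 1 \<le> r i \<and> r i \<le> p"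
    and c: "carries (int p) f (signed_digit r J) c" and c_unit: "\<forall>i<f. \<bar>c i\<bar> \<le> 1"
  shows "inP p f r \<and> J_compatible p f r J"
proof -
  have succ: "(i + 1) mod f < f" for i using \<open>f \<ge> 1\<close> by simp
  have K: "(c i = 0 \<and> r i = 1 \<and> c ((i + 1) mod f) \<noteq> 0 \<and> (i \<in> J \<longleftrightarrow> c ((i + 1) mod f) = -1)) \<or>
      (c i \<noteq> 0 \<and> c ((i + 1) mod f) = 0 \<and> r i = p \<and> (i \<in> J \<longleftrightarrow> c i = 1)) \<or>
      (c i \<noteq> 0 \<and> c ((i + 1) mod f) = c i \<and> r i = p - 1 \<and> (i \<in> J \<longleftrightarrow> c i = 1))"
    if "i < f" for i
    using unit_carry_step[OF \<open>p \<ge> 2\<close>, of "c i" "c ((i + 1) mod f)" "r i" "i \<in> J"]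
      c_unit c r succ[of i] that unfolding carries_def signed_digit_def by auto
  have p_ne: "p \<noteq> 1" "p - 1 \<noteq> p" using \<open>p \<ge> 2\<close> by auto
  have "inP p f r"
    unfolding inP_def
  proof (intro allI impI)
    fix i assume "i < f"
    then show "r i \<in> {1, p - 1, p} \<and> (r i = p \<longrightarrow> r ((i + 1) mod f) = 1) \<and>
        (r i \<in> {1, p - 1} \<longrightarrow> r ((i + 1) mod f) \<in> {p - 1, p})"
      using K[of i] K[OF succ[of i]] p_ne by auto
  qed
  moreover have "J_compatible p f r J"
    unfolding J_compatible_def
  proof (intro allI impI, intro conjI)
    fix i assume i: "i < f"
    define q where "q = (i + f - 1) mod f"
    have q: "q < f" "(q + 1) mod f = i" using cyclic_pred_succ[OF i] unfolding q_def by auto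
    have Kq: "(c q = 0 \<and> r q = 1 \<and> c i \<noteq> 0) \<or> (c q \<noteq> 0 \<and> c i = 0 \<and> r q = p) \<or>
        (c q \<noteq> 0 \<and> c i = c q \<and> r q = p - 1)"
      using K[OF q(1)] q(2) by auto
    have c_succ: "c ((i + 1) mod f) \<in> {-1, 0, 1}" using c_unit succ[of i] by fastforce
    have J_succ: "(i + 1) mod f \<in> J \<longleftrightarrow> c ((i + 1) mod f) = 1" if "c ((i + 1) mod f) \<noteq> 0"
      using K[OF succ[of i]] that by blast
    show "(r ((i + f - 1) mod f), r i) = (p, 1) \<longrightarrow> ((i + 1) mod f \<in> J) = (i \<notin> J)"
    proof
      assume "(r ((i + f - 1) mod f), r i) = (p, 1)"
      then have "c i = 0" using Kq p_ne unfolding q_def by auto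
      then show "((i + 1) mod f \<in> J) = (i \<notin> J)" using K[OF i] J_succ c_succ by auto
    qed
    show "(r ((i + f - 1) mod f), r i) \<in> {(1, p - 1), (p - 1, p - 1)} \<longrightarrow>
        ((i + 1) mod f \<in> J) = (i \<in> J)"
    proof
      assume "(r ((i + f - 1) mod f), r i) \<in> {(1, p - 1), (p - 1, p - 1)}"
      then have "r q \<noteq> p" "r i = p - 1" using p_ne unfolding q_def by auto
      then have "c i \<noteq> 0" "c ((i + 1) mod f) = c i" "i \<in> J \<longleftrightarrow> c i = 1"
        using Kq K[OF i] p_ne by auto
      then show "((i + 1) mod f \<in> J) = (i \<in> J)" using J_succ by auto
    qed
  qed
  ultimately show ?thesis ..
qed

lemma two_carry_imp_exceptional:
  assumes "J \<subseteq> {0..<f}" and r: "\<forall>i<f. 1 \<le> r i \<and> r i \<le> 2"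
    and c: "carries 2 f (signed_digit r J) c" and "i0 < f" "\<bar>c i0\<bar> = 2"
    and cb: "\<forall>i<f. \<bar>c i\<bar> \<le> 2"
  shows "(\<forall>i<f. r i = 2) \<and> (J = {} \<or> J = {0..<f})"
proof -
  have "\<forall>i<f. \<bar>signed_digit r J i\<bar> \<le> 2" using r unfolding signed_digit_def by auto
  then have digits: "\<forall>i<f. signed_digit r J i = c i0"
    using carries_base_two_constant[OF c \<open>i0 < f\<close> \<open>\<bar>c i0\<bar> = 2\<close> _ cb] by blast
  then have "\<forall>i<f. r i = 2" using \<open>\<bar>c i0\<bar> = 2\<close> unfolding signed_digit_def by (force split: if_splits)
  moreover have "J = {} \<or> J = {0..<f}"
  proof (cases "c i0 = 2")
    case True
    then have "{0..<f} \<subseteq> J" using digits unfolding signed_digit_def by (force split: if_splits)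
    then show ?thesis using assms(1) by auto
  next
    case False
    then have "c i0 = -2" using \<open>\<bar>c i0\<bar> = 2\<close> by auto
    then have "J \<inter> {0..<f} = {}" using digits unfolding signed_digit_def by (force split: if_splits)
    then show ?thesis using assms(1) by auto
  qed
  ultimately show ?thesis ..
qed

lemma compatible_imp_carries:
  assumes "p \<ge> 2" "f \<ge> 1" "inP p f r" "J_compatible p f r J"
  shows "carries (int p) f (signed_digit r J)
           (\<lambda>i. if r ((i + f - 1) mod f) = p then 0 else if i \<in> J then 1 else -1)"
    (is "carries _ _ _ ?c")
  unfolding carries_def
proof (intro allI impI)
  fix i assume i: "i < f"
  define q where "q = (i + f - 1) mod f"
  define s where "s = (i + 1) mod f"
  have q: "q < f" "(q + 1) mod f = i" using cyclic_pred_succ[OF i] unfolding q_def by auto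
  have s: "s < f" "(s + f - 1) mod f = i" using cyclic_pred_succ[OF i] \<open>f \<ge> 1\<close> unfolding s_def by auto
  have c_i: "?c i = (if r q = p then 0 else if i \<in> J then 1 else -1)" unfolding q_def by simp
  have c_s: "?c s = (if r i = p then 0 else if s \<in> J then 1 else -1)" using s by simp
  have P_q: "r q \<in> {1, p - 1, p}" "r q = p \<longrightarrow> r i = 1" "r q \<in> {1, p - 1} \<longrightarrow> r i \<in> {p - 1, p}"
    using assms(3) q unfolding inP_def by auto
  have J_i: "(r q, r i) = (p, 1) \<longrightarrow> (s \<in> J \<longleftrightarrow> i \<notin> J)"
      "(r q, r i) \<in> {(1, p - 1), (p - 1, p - 1)} \<longrightarrow> (s \<in> J \<longleftrightarrow> i \<in> J)"
    using assms(4) i unfolding J_compatible_def q_def s_def by auto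
  have p_ne: "p \<noteq> 1" "p - 1 \<noteq> p" using \<open>p \<ge> 2\<close> by auto
  have "signed_digit r J i + ?c s = int p * ?c i"
  proof (cases "r q = p")
    case True
    then show ?thesis using P_q J_i c_i c_s p_ne unfolding signed_digit_def by auto
  next
    case False
    then consider "r i = p" | "r i = p - 1" using P_q by auto
    then show ?thesis
    proof cases
      case 1
      then show ?thesis using False c_i c_s unfolding signed_digit_def by auto
    next
      case 2
      then have "s \<in> J \<longleftrightarrow> i \<in> J" using J_i False P_q by auto
      then show ?thesis using 2 False c_i c_s p_ne \<open>p \<ge> 2\<close> unfolding signed_digit_def by auto
    qed
  qed
  then show "signed_digit r J i + ?c ((i + 1) mod f) = int p * ?c i" unfolding s_def .
qed

lemma exceptional_imp_carries:
  assumes "\<forall>i<f. r i = 2" "J = {} \<or> J = {0..<f}"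
  shows "\<exists>c. carries 2 f (signed_digit r J) c"
proof -
  have "carries 2 f (signed_digit r J) (\<lambda>_. if J = {} then -2 else 2)"
    using assms unfolding carries_def signed_digit_def by auto
  then show ?thesis by blast
qed

lemma carries_exist_iff:
  assumes "p \<ge> 2" "f \<ge> 1" and r: "\<forall>i<f. 1 \<le> r i \<and> r i \<le> p" and "J \<subseteq> {0..<f}"
  shows "(\<exists>c. carries (int p) f (signed_digit r J) c) \<longleftrightarrow>
    ((inP p f r \<and> J_compatible p f r J) \<or>
     (p = 2 \<and> (\<forall>i<f. r i = 2) \<and> (J = {} \<or> J = {0..<f})))"
proof
  assume "\<exists>c. carries (int p) f (signed_digit r J) c"
  then obtain c where c: "carries (int p) f (signed_digit r J) c" ..
  have "\<forall>i<f. \<bar>signed_digit r J i\<bar> \<le> int p" using r unfolding signed_digit_def by auto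
  then have "(\<forall>i<f. \<bar>c i\<bar> \<le> 1) \<or> (int p = 2 \<and> (\<exists>i0<f. \<bar>c i0\<bar> = 2) \<and> (\<forall>i<f. \<bar>c i\<bar> \<le> 2))"
    using carries_bounded[OF c \<open>f \<ge> 1\<close>] \<open>p \<ge> 2\<close> by simp
  then consider "\<forall>i<f. \<bar>c i\<bar> \<le> 1"
    | i0 where "p = 2" "i0 < f" "\<bar>c i0\<bar> = 2" "\<forall>i<f. \<bar>c i\<bar> \<le> 2"
    by auto
  then show "(inP p f r \<and> J_compatible p f r J) \<or>
      (p = 2 \<and> (\<forall>i<f. r i = 2) \<and> (J = {} \<or> J = {0..<f}))"
  proof cases
    case 1
    then show ?thesis using unit_carries_imp_compatible[OF assms(1,2) r c] by blast
  next
    case (2 i0)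
    have "carries 2 f (signed_digit r J) c" using c \<open>p = 2\<close> by simp
    moreover have "\<forall>i<f. 1 \<le> r i \<and> r i \<le> 2" using r \<open>p = 2\<close> by simp
    ultimately show ?thesis
      using two_carry_imp_exceptional[OF assms(4)] 2 by blast
  qed
next
  assume "(inP p f r \<and> J_compatible p f r J) \<or>
      (p = 2 \<and> (\<forall>i<f. r i = 2) \<and> (J = {} \<or> J = {0..<f}))"
  then show "\<exists>c. carries (int p) f (signed_digit r J) c"
  proof
    assume "inP p f r \<and> J_compatible p f r J"
    then show ?thesis using compatible_imp_carries[OF assms(1,2)] by blast
  next
    assume "p = 2 \<and> (\<forall>i<f. r i = 2) \<and> (J = {} \<or> J = {0..<f})"
    then show ?thesis using exceptional_imp_carries[of f r J] by simp
  qed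
qed

theorem mainTheorem10:
  fixes p f :: nat and r :: "nat \<Rightarrow> nat" and J :: "nat set"
  assumes "prime p" and "f \<ge> 1"
    and "\<forall>i<f. 1 \<le> r i \<and> r i \<le> p"
    and "J \<subseteq> {0..<f}"
  shows "[(\<Sum>i<f. int p ^ (f - 1 - i) * int (hval r J i))
          = (\<Sum>i<f. int p ^ (f - 1 - i) * (int (r i) - int (hval r J i)))] (mod (int p ^ f - 1))
     \<longleftrightarrow> ((inP p f r \<and> J_compatible p f r J) \<or>
          (p = 2 \<and> (\<forall>i<f. r i = 2) \<and> (J = {} \<or> J = {0..<f})))"
proof -
  have "p \<ge> 2" using \<open>prime p\<close> prime_ge_2_nat by blast
  have "[(\<Sum>i<f. int p ^ (f - 1 - i) * int (hval r J i))
          = (\<Sum>i<f. int p ^ (f - 1 - i) * (int (r i) - int (hval r J i)))] (mod (int p ^ f - 1))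
     \<longleftrightarrow> (int p ^ f - 1) dvd (\<Sum>i<f. int p ^ (f - 1 - i) * signed_digit r J i)"
    by (rule congruence_iff_signed_dvd)
  also have "\<dots> \<longleftrightarrow> (\<exists>c. carries (int p) f (signed_digit r J) c)"
    by (rule dvd_iff_carries[OF \<open>f \<ge> 1\<close>])
  also have "\<dots> \<longleftrightarrow> ((inP p f r \<and> J_compatible p f r J) \<or>
          (p = 2 \<and> (\<forall>i<f. r i = 2) \<and> (J = {} \<or> J = {0..<f})))"
    by (rule carries_exist_iff[OF \<open>p \<ge> 2\<close> assms(2-4)])
  finally show ?thesis .
qed

end
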